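(* The number of pairwise nonequivalent regular graphical Hadamard matrices of order $4^m$ is unbounded as $m\to\infty$.
   Context: A Hadamard matrix of order $n$ is an $n\times n$ matrix $H$ with entries $\pm1$ such that $HH^{\top}=nI$. It is graphical if it is symmetric with constant diagonal, and regular if all its row sums and column sums are equal. Two Hadamard matrices are equivalent if one can be obtained from the other by permuting rows, permuting columns, and multiplying rows and columns by $-1$. *)

theory Defs
  imports Main
begin

text \<open>An n x n matrix is represented as a function nat => nat => int,
  only the entries with indices in {..<n} being relevant.\<close>

definition hadamard :: "nat \<Rightarrow> (nat \<Rightarrow> nat \<Rightarrow> int) \<Rightarrow> bool" where
  "hadamard n H \<longleftrightarrow>
     (\<forall>i<n. \<forall>j<n. H i j = 1 \<or> H i j = -1) \<and>
     (\<forall>i<n. \<forall>k<n. (\<Sum>j<n. H i j * H k j) = (if i = k then int n else 0))"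

definition graphical :: "nat \<Rightarrow> (nat \<Rightarrow> nat \<Rightarrow> int) \<Rightarrow> bool" where
  "graphical n H \<longleftrightarrow>
     (\<forall>i<n. \<forall>j<n. H i j = H j i) \<and> (\<forall>i<n. \<forall>j<n. H i i = H j j)"

definition regular :: "nat \<Rightarrow> (nat \<Rightarrow> nat \<Rightarrow> int) \<Rightarrow> bool" where
  "regular n H \<longleftrightarrow>
     (\<exists>s. (\<forall>i<n. (\<Sum>j<n. H i j) = s) \<and> (\<forall>j<n. (\<Sum>i<n. H i j) = s))"

definition hadamard_equiv :: "nat \<Rightarrow> (nat \<Rightarrow> nat \<Rightarrow> int) \<Rightarrow> (nat \<Rightarrow> nat \<Rightarrow> int) \<Rightarrow> bool" where
  "hadamard_equiv n H K \<longleftrightarrow>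
     (\<exists>\<sigma> \<tau> r c. bij_betw \<sigma> {..<n} {..<n} \<and> bij_betw \<tau> {..<n} {..<n} \<and>
        (\<forall>i<n. r i = 1 \<or> r i = (-1::int)) \<and> (\<forall>j<n. c j = 1 \<or> c j = (-1::int)) \<and>
        (\<forall>i<n. \<forall>j<n. K i j = r i * c j * H (\<sigma> i) (\<tau> j)))"

end

theory Submission
  imports Defs
begin

text \<open>The number of quadruples of rows of a Hadamard matrix of order \<open>n\<close> whose entrywise product
  is a constant vector is invariant under equivalence and multiplicative under
  Kronecker products. Since the fourth row of such a quadruple is determined by the first three
  (distinct rows are orthogonal), it is at most \<open>n\<^sup>3\<close>; the matrix \<open>D = J - 2I\<close> of order 4 attains
  this bound, while an explicit regular graphical Hadamard matrix \<open>B\<close> of order 64 has three rows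
  whose product is not \<open>\<plusminus>\<close> a row, so its count \<open>c\<close> satisfies \<open>0 < c < 64\<^sup>3\<close>. The regular
  graphical Hadamard matrices \<open>B\<^sup>\<otimes>\<^sup>t \<otimes> D\<^sup>\<otimes>\<^sup>(\<^sup>3\<^sup>N\<^sup>-\<^sup>3\<^sup>t\<^sup>)\<close>, \<open>t = 0, \<dots>, N\<close>, of order \<open>4\<^sup>3\<^sup>N\<close>
  then have the pairwise distinct invariants \<open>c\<^sup>t (64\<^sup>3)\<^sup>N\<^sup>-\<^sup>t\<close>.\<close>

section \<open>Kronecker products\<close>

lemma sum_div_mod_product:
  fixes f g :: "nat \<Rightarrow> 'a::comm_semiring_1"
  assumes "0 < k"
  shows "(\<Sum>i<n*k. f (i div k) * g (i mod k)) = (\<Sum>a<n. f a) * (\<Sum>b<k. g b)"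
proof -
  have "(\<Sum>i<n*k. f (i div k) * g (i mod k)) = (\<Sum>a<n. \<Sum>i\<in>{a*k..<a*k+k}. f (i div k) * g (i mod k))"
    by (rule sum.nat_group[symmetric])
  also have "\<dots> = (\<Sum>a<n. \<Sum>b<k. f a * g b)"
  proof (rule sum.cong[OF refl])
    fix a
    have "(\<Sum>i\<in>{a*k..<a*k+k}. f (i div k) * g (i mod k))
        = (\<Sum>b<k. f ((b + a*k) div k) * g ((b + a*k) mod k))"
      using sum.shift_bounds_nat_ivl[of "\<lambda>i. f (i div k) * g (i mod k)" 0 "a*k" k]
      by (simp add: add.commute atLeast0LessThan)
    also have "\<dots> = (\<Sum>b<k. f a * g b)"
      using assms by (intro sum.cong) auto
    finally show "(\<Sum>i\<in>{a*k..<a*k+k}. f (i div k) * g (i mod k)) = (\<Sum>b<k. f a * g b)" .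
  qed
  finally show ?thesis by (simp add: sum_product)
qed

lemma sum4_div_mod_product:
  fixes f g :: "nat \<Rightarrow> nat \<Rightarrow> nat \<Rightarrow> nat \<Rightarrow> 'a::comm_semiring_1"
  assumes k: "0 < k"
  shows "(\<Sum>a<n*k. \<Sum>b<n*k. \<Sum>c<n*k. \<Sum>d<n*k.
            f (a div k) (b div k) (c div k) (d div k) * g (a mod k) (b mod k) (c mod k) (d mod k))
       = (\<Sum>a<n. \<Sum>b<n. \<Sum>c<n. \<Sum>d<n. f a b c d) * (\<Sum>a<k. \<Sum>b<k. \<Sum>c<k. \<Sum>d<k. g a b c d)"
proof -
  have d: "(\<Sum>d<n*k. f a b c (d div k) * g a' b' c' (d mod k))
         = (\<Sum>d<n. f a b c d) * (\<Sum>d<k. g a' b' c' d)" for a b c a' b' c'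
    by (rule sum_div_mod_product[OF k])
  have c: "(\<Sum>c<n*k. (\<Sum>d<n. f a b (c div k) d) * (\<Sum>d<k. g a' b' (c mod k) d))
         = (\<Sum>c<n. \<Sum>d<n. f a b c d) * (\<Sum>c<k. \<Sum>d<k. g a' b' c d)" for a b a' b'
    by (rule sum_div_mod_product[OF k])
  have b: "(\<Sum>b<n*k. (\<Sum>c<n. \<Sum>d<n. f a (b div k) c d) * (\<Sum>c<k. \<Sum>d<k. g a' (b mod k) c d))
         = (\<Sum>b<n. \<Sum>c<n. \<Sum>d<n. f a b c d) * (\<Sum>b<k. \<Sum>c<k. \<Sum>d<k. g a' b c d)" for a a'
    by (rule sum_div_mod_product[OF k])
  have a: "(\<Sum>a<n*k. (\<Sum>b<n. \<Sum>c<n. \<Sum>d<n. f (a div k) b c d) * (\<Sum>b<k. \<Sum>c<k. \<Sum>d<k. g (a mod k) b c d))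
         = (\<Sum>a<n. \<Sum>b<n. \<Sum>c<n. \<Sum>d<n. f a b c d) * (\<Sum>a<k. \<Sum>b<k. \<Sum>c<k. \<Sum>d<k. g a b c d)"
    by (rule sum_div_mod_product[OF k])
  show ?thesis by (simp only: d c b a)
qed

lemma hadamard_entry:
  "hadamard n H \<Longrightarrow> i < n \<Longrightarrow> j < n \<Longrightarrow> H i j = 1 \<or> H i j = -1"
  unfolding hadamard_def by blast

lemma hadamard_inner_product:
  "hadamard n H \<Longrightarrow> i < n \<Longrightarrow> k < n \<Longrightarrow> (\<Sum>j<n. H i j * H k j) = (if i = k then int n else 0)"
  unfolding hadamard_def by blast

lemma sign_mult: "(x::int) = 1 \<or> x = -1 \<Longrightarrow> y = 1 \<or> y = -1 \<Longrightarrow> x * y = 1 \<or> x * y = -1"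
  by auto

lemma mod_less_of_less_mult: "i < n * k \<Longrightarrow> i mod (k::nat) < k"
  by (cases "k = 0") auto

text \<open>\<open>kron k A B\<close> is \<open>A \<otimes> B\<close> for a \<open>k \<times> k\<close> matrix \<open>B\<close>: row \<open>i\<close> corresponds to the pair
  \<open>(i div k, i mod k)\<close> of a row of \<open>A\<close> and a row of \<open>B\<close>.\<close>
definition kron :: "nat \<Rightarrow> (nat \<Rightarrow> nat \<Rightarrow> int) \<Rightarrow> (nat \<Rightarrow> nat \<Rightarrow> int) \<Rightarrow> nat \<Rightarrow> nat \<Rightarrow> int" where
  "kron k A B i j = A (i div k) (j div k) * B (i mod k) (j mod k)"

lemma kron_hadamard:
  assumes A: "hadamard n A" and B: "hadamard k B" and k: "0 < k"
  shows "hadamard (n * k) (kron k A B)"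
  unfolding hadamard_def
proof (intro conjI allI impI)
  fix i j assume i: "i < n * k" and j: "j < n * k"
  show "kron k A B i j = 1 \<or> kron k A B i j = -1"
    unfolding kron_def using i j
    by (intro sign_mult hadamard_entry[OF A] hadamard_entry[OF B]
        less_mult_imp_div_less mod_less_of_less_mult)
next
  fix i i' assume i: "i < n * k" and i': "i' < n * k"
  have "(\<Sum>j<n * k. kron k A B i j * kron k A B i' j)
      = (\<Sum>j<n * k. (A (i div k) (j div k) * A (i' div k) (j div k))
                    * (B (i mod k) (j mod k) * B (i' mod k) (j mod k)))"
    unfolding kron_def by (simp add: algebra_simps)
  also have "\<dots> = (\<Sum>a<n. A (i div k) a * A (i' div k) a) * (\<Sum>b<k. B (i mod k) b * B (i' mod k) b)"
    by (rule sum_div_mod_product[OF k])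
  also have "\<dots> = (if i div k = i' div k then int n else 0) * (if i mod k = i' mod k then int k else 0)"
    using i i' by (simp add: hadamard_inner_product[OF A] hadamard_inner_product[OF B]
        less_mult_imp_div_less mod_less_of_less_mult)
  also have "\<dots> = (if i = i' then int (n * k) else 0)"
  proof (cases "i = i'")
    case False
    then have "i div k \<noteq> i' div k \<or> i mod k \<noteq> i' mod k" by (metis div_mult_mod_eq)
    with False show ?thesis by auto
  qed simp
  finally show "(\<Sum>j<n * k. kron k A B i j * kron k A B i' j) = (if i = i' then int (n * k) else 0)" .
qed

lemma kron_graphical:
  assumes "graphical n A" and "graphical k B"
  shows "graphical (n * k) (kron k A B)"
  unfolding graphical_def
proof (intro conjI allI impI)
  fix i j assume "i < n * k" "j < n * k"
  then have "i div k < n" "j div k < n" "i mod k < k" "j mod k < k"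
    by (simp_all add: less_mult_imp_div_less mod_less_of_less_mult)
  with assms have "A (i div k) (j div k) = A (j div k) (i div k)" "B (i mod k) (j mod k) = B (j mod k) (i mod k)"
    "A (i div k) (i div k) = A (j div k) (j div k)" "B (i mod k) (i mod k) = B (j mod k) (j mod k)"
    unfolding graphical_def by blast+
  then show "kron k A B i j = kron k A B j i" "kron k A B i i = kron k A B j j"
    unfolding kron_def by simp_all
qed

lemma kron_regular:
  assumes A: "regular n A" and B: "regular k B" and k: "0 < k"
  shows "regular (n * k) (kron k A B)"
proof -
  obtain s where s: "\<forall>i<n. (\<Sum>j<n. A i j) = s" "\<forall>j<n. (\<Sum>i<n. A i j) = s"
    using A unfolding regular_def by blast
  obtain t where t: "\<forall>i<k. (\<Sum>j<k. B i j) = t" "\<forall>j<k. (\<Sum>i<k. B i j) = t"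
    using B unfolding regular_def by blast
  show ?thesis unfolding regular_def
  proof (intro exI[of _ "s * t"] conjI allI impI)
    fix i assume "i < n * k"
    then have "i div k < n" "i mod k < k" by (simp_all add: less_mult_imp_div_less mod_less_of_less_mult)
    have "(\<Sum>j<n * k. kron k A B i j) = (\<Sum>a<n. A (i div k) a) * (\<Sum>b<k. B (i mod k) b)"
      unfolding kron_def by (rule sum_div_mod_product[OF k])
    also have "\<dots> = s * t" using s t \<open>i div k < n\<close> \<open>i mod k < k\<close> by simp
    finally show "(\<Sum>j<n * k. kron k A B i j) = s * t" .
  next
    fix j assume "j < n * k"
    then have "j div k < n" "j mod k < k" by (simp_all add: less_mult_imp_div_less mod_less_of_less_mult)
    have "(\<Sum>i<n * k. kron k A B i j) = (\<Sum>a<n. A a (j div k)) * (\<Sum>b<k. B b (j mod k))"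
      unfolding kron_def by (rule sum_div_mod_product[OF k])
    also have "\<dots> = s * t" using s t \<open>j div k < n\<close> \<open>j mod k < k\<close> by simp
    finally show "(\<Sum>i<n * k. kron k A B i j) = s * t" .
  qed
qed

fun kron_power :: "nat \<Rightarrow> (nat \<Rightarrow> nat \<Rightarrow> int) \<Rightarrow> nat \<Rightarrow> nat \<Rightarrow> nat \<Rightarrow> int" where
  "kron_power k X 0 = (\<lambda>i j. 1)"
| "kron_power k X (Suc t) = kron (k ^ t) X (kron_power k X t)"

lemma kron_power_hadamard:
  assumes "hadamard k X" and "0 < k"
  shows "hadamard (k ^ t) (kron_power k X t)"
proof (induction t)
  case 0
  show ?case by (simp add: hadamard_def)
next
  case (Suc t)
  then show ?case using assms by (simp add: kron_hadamard)
qed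

lemma kron_power_graphical:
  assumes "graphical k X"
  shows "graphical (k ^ t) (kron_power k X t)"
proof (induction t)
  case 0
  show ?case by (simp add: graphical_def)
next
  case (Suc t)
  then show ?case using assms by (simp add: kron_graphical)
qed

lemma kron_power_regular:
  assumes "regular k X" and "0 < k"
  shows "regular (k ^ t) (kron_power k X t)"
proof (induction t)
  case 0
  show ?case by (simp add: regular_def)
next
  case (Suc t)
  then show ?case using assms by (simp add: kron_regular)
qed

section \<open>Quadruples of rows with constant product\<close>

lemma abs_sum_signs_le:
  assumes "\<forall>j<n. w j = 1 \<or> w j = (-1::int)"
  shows "\<bar>\<Sum>j<n. w j\<bar> \<le> int n"
proof -
  have "\<bar>\<Sum>j<n. w j\<bar> \<le> (\<Sum>j<n. \<bar>w j\<bar>)" by (rule sum_abs)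
  also have "\<dots> = (\<Sum>j<n. 1)" using assms by (intro sum.cong) auto
  finally show ?thesis by simp
qed

lemma abs_sum_signs_eq_imp_constant:
  assumes w: "\<forall>j<n. w j = 1 \<or> w j = (-1::int)" and s: "\<bar>\<Sum>j<n. w j\<bar> = int n"
  obtains e where "e = 1 \<or> e = -1" and "\<forall>j<n. w j = e"
proof -
  consider "(\<Sum>j<n. w j) = (\<Sum>j<n. 1)" | "(\<Sum>j<n. w j) = (\<Sum>j<n. -1)"
    using s by (auto simp: abs_if split: if_splits)
  then show thesis
  proof cases
    case 1
    have "\<forall>j\<in>{..<n}. 1 - w j = 0"
      using 1 w by (subst sum_nonneg_eq_0_iff[symmetric]) (auto simp: sum_subtractf)
    then show thesis using that[of 1] by simp
  next
    case 2
    have "\<forall>j\<in>{..<n}. w j + 1 = 0"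
      using 2 w by (subst sum_nonneg_eq_0_iff[symmetric]) (auto simp: sum.distrib)
    then show thesis using that[of "-1"] by (simp add: eq_neg_iff_add_eq_0)
  qed
qed

lemma abs_mult_eq_bounds_iff:
  fixes x y :: int
  assumes "\<bar>x\<bar> \<le> p" "\<bar>y\<bar> \<le> q" "0 < p" "0 < q"
  shows "\<bar>x * y\<bar> = p * q \<longleftrightarrow> \<bar>x\<bar> = p \<and> \<bar>y\<bar> = q"
proof
  assume eq: "\<bar>x * y\<bar> = p * q"
  show "\<bar>x\<bar> = p \<and> \<bar>y\<bar> = q"
  proof (rule ccontr)
    assume "\<not> (\<bar>x\<bar> = p \<and> \<bar>y\<bar> = q)"
    with assms have "\<bar>x\<bar> < p \<or> \<bar>y\<bar> < q" by auto
    then have "\<bar>x\<bar> * \<bar>y\<bar> < p * q"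
    proof
      assume "\<bar>x\<bar> < p"
      have "\<bar>x\<bar> * \<bar>y\<bar> \<le> \<bar>x\<bar> * q" using assms by (simp add: mult_left_mono)
      also have "\<dots> < p * q" using \<open>\<bar>x\<bar> < p\<close> assms by (simp add: mult_strict_right_mono)
      finally show ?thesis .
    next
      assume "\<bar>y\<bar> < q"
      have "\<bar>x\<bar> * \<bar>y\<bar> \<le> p * \<bar>y\<bar>" using assms by (simp add: mult_right_mono)
      also have "\<dots> < p * q" using \<open>\<bar>y\<bar> < q\<close> assms by (simp add: mult_strict_left_mono)
      finally show ?thesis .
    qed
    then show False using eq by (simp add: abs_mult)
  qed
qed (simp add: abs_mult)

text \<open>For a matrix with entries \<open>\<plusminus>1\<close>, the sum below has absolute value \<open>n\<close> exactly when the
  entrywise product of the rows \<open>a, b, c, d\<close> is a constant vector.\<close>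
definition constant_product :: "nat \<Rightarrow> (nat \<Rightarrow> nat \<Rightarrow> int) \<Rightarrow> nat \<Rightarrow> nat \<Rightarrow> nat \<Rightarrow> nat \<Rightarrow> bool" where
  "constant_product n H a b c d \<longleftrightarrow> \<bar>\<Sum>j<n. H a j * H b j * H c j * H d j\<bar> = int n"

definition constant_product_count :: "nat \<Rightarrow> (nat \<Rightarrow> nat \<Rightarrow> int) \<Rightarrow> nat" where
  "constant_product_count n H =
     (\<Sum>a<n. \<Sum>b<n. \<Sum>c<n. \<Sum>d<n. of_bool (constant_product n H a b c d))"

lemma hadamard_row_product_sign:
  assumes "hadamard n H" and "a < n" "b < n" "c < n" "d < n" "j < n"
  shows "H a j * H b j * H c j * H d j = 1 \<or> H a j * H b j * H c j * H d j = -1"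
  using assms by (intro sign_mult hadamard_entry[OF assms(1)])

lemma abs_sum_row_product_le:
  assumes "hadamard n H" and "a < n" "b < n" "c < n" "d < n"
  shows "\<bar>\<Sum>j<n. H a j * H b j * H c j * H d j\<bar> \<le> int n"
  using assms by (intro abs_sum_signs_le allI impI hadamard_row_product_sign)

lemma constant_product_kron:
  assumes A: "hadamard n A" and B: "hadamard k B" and n: "0 < n" and k: "0 < k"
    and bounds: "a < n * k" "b < n * k" "c < n * k" "d < n * k"
  shows "constant_product (n * k) (kron k A B) a b c d \<longleftrightarrow>
           constant_product n A (a div k) (b div k) (c div k) (d div k) \<and>
           constant_product k B (a mod k) (b mod k) (c mod k) (d mod k)"
proof -
  let ?x = "\<Sum>j<n. A (a div k) j * A (b div k) j * A (c div k) j * A (d div k) j"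
  let ?y = "\<Sum>j<k. B (a mod k) j * B (b mod k) j * B (c mod k) j * B (d mod k) j"
  have "(\<Sum>j<n * k. kron k A B a j * kron k A B b j * kron k A B c j * kron k A B d j)
      = (\<Sum>j<n * k. (A (a div k) (j div k) * A (b div k) (j div k) * A (c div k) (j div k) * A (d div k) (j div k))
            * (B (a mod k) (j mod k) * B (b mod k) (j mod k) * B (c mod k) (j mod k) * B (d mod k) (j mod k)))"
    unfolding kron_def by (simp add: algebra_simps)
  also have "\<dots> = ?x * ?y"
    by (rule sum_div_mod_product[OF k])
  finally have prod: "(\<Sum>j<n * k. kron k A B a j * kron k A B b j * kron k A B c j * kron k A B d j) = ?x * ?y" .
  have "\<bar>?x\<bar> \<le> int n" "\<bar>?y\<bar> \<le> int k"
    using bounds by (simp_all add: abs_sum_row_product_le[OF A] abs_sum_row_product_le[OF B]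
        less_mult_imp_div_less mod_less_of_less_mult)
  then show ?thesis
    unfolding constant_product_def prod of_nat_mult using n k by (intro abs_mult_eq_bounds_iff) auto
qed

lemma constant_product_count_kron:
  assumes A: "hadamard n A" and B: "hadamard k B" and n: "0 < n" and k: "0 < k"
  shows "constant_product_count (n * k) (kron k A B) = constant_product_count n A * constant_product_count k B"
proof -
  have "constant_product_count (n * k) (kron k A B)
      = (\<Sum>a<n * k. \<Sum>b<n * k. \<Sum>c<n * k. \<Sum>d<n * k.
           of_bool (constant_product n A (a div k) (b div k) (c div k) (d div k)) *
           of_bool (constant_product k B (a mod k) (b mod k) (c mod k) (d mod k)))"
    unfolding constant_product_count_def
    by (intro sum.cong refl) (simp add: constant_product_kron[OF A B n k] del: sum_of_bool_eq)
  also have "\<dots> = constant_product_count n A * constant_product_count k B"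
    unfolding constant_product_count_def by (rule sum4_div_mod_product[OF k])
  finally show ?thesis .
qed

lemma constant_product_count_kron_power:
  assumes "hadamard k X" and "0 < k"
  shows "constant_product_count (k ^ t) (kron_power k X t) = constant_product_count k X ^ t"
proof (induction t)
  case 0
  show ?case by (simp add: constant_product_count_def constant_product_def)
next
  case (Suc t)
  then show ?case
    using assms by (simp add: constant_product_count_kron kron_power_hadamard)
qed

lemma constant_product_signed_permutation:
  assumes \<sigma>: "bij_betw \<sigma> {..<n} {..<n}" and \<tau>: "bij_betw \<tau> {..<n} {..<n}"
    and r: "\<forall>i<n. r i = 1 \<or> r i = (-1::int)" and s: "\<forall>j<n. s j = 1 \<or> s j = (-1::int)"
    and K: "\<forall>i<n. \<forall>j<n. K i j = r i * s j * H (\<sigma> i) (\<tau> j)"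
    and bounds: "a < n" "b < n" "c < n" "d < n"
  shows "constant_product n K a b c d \<longleftrightarrow> constant_product n H (\<sigma> a) (\<sigma> b) (\<sigma> c) (\<sigma> d)"
proof -
  let ?r = "r a * r b * r c * r d"
  let ?h = "\<lambda>j. H (\<sigma> a) j * H (\<sigma> b) j * H (\<sigma> c) j * H (\<sigma> d) j"
  have r_abs: "\<bar>r i\<bar> = 1" if "i < n" for i
    using r that by auto
  have "(\<Sum>j<n. K a j * K b j * K c j * K d j) = (\<Sum>j<n. ?r * ?h (\<tau> j))"
  proof (rule sum.cong[OF refl])
    fix j assume "j \<in> {..<n}"
    then have "s j * s j * s j * s j = 1" using s by auto
    then show "K a j * K b j * K c j * K d j = ?r * ?h (\<tau> j)"
      using K bounds \<open>j \<in> {..<n}\<close> by (simp add: algebra_simps)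
  qed
  also have "\<dots> = ?r * (\<Sum>j<n. ?h j)"
    by (simp add: sum_distrib_left[symmetric] sum.reindex_bij_betw[OF \<tau>, of ?h])
  finally have "(\<Sum>j<n. K a j * K b j * K c j * K d j) = ?r * (\<Sum>j<n. ?h j)" .
  moreover have "\<bar>?r\<bar> = 1"
    using bounds r_abs by (simp add: abs_mult)
  ultimately have "\<bar>\<Sum>j<n. K a j * K b j * K c j * K d j\<bar> = \<bar>\<Sum>j<n. ?h j\<bar>"
    by (simp add: abs_mult)
  then show ?thesis unfolding constant_product_def by simp
qed

lemma constant_product_count_equiv:
  assumes "hadamard_equiv n H K"
  shows "constant_product_count n K = constant_product_count n H"
proof -
  obtain \<sigma> \<tau> r s where \<sigma>: "bij_betw \<sigma> {..<n} {..<n}" and \<tau>: "bij_betw \<tau> {..<n} {..<n}"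
    and r: "\<forall>i<n. r i = 1 \<or> r i = (-1::int)" and s: "\<forall>j<n. s j = 1 \<or> s j = (-1::int)"
    and K: "\<forall>i<n. \<forall>j<n. K i j = r i * s j * H (\<sigma> i) (\<tau> j)"
    using assms unfolding hadamard_equiv_def by blast
  let ?P = "\<lambda>a b c d. of_bool (constant_product n H a b c d) :: nat"
  have reindex: "(\<Sum>x<n. g (\<sigma> x)) = (\<Sum>x<n. g x)" for g :: "nat \<Rightarrow> nat"
    using sum.reindex_bij_betw[OF \<sigma>] by simp
  have "constant_product_count n K = (\<Sum>a<n. \<Sum>b<n. \<Sum>c<n. \<Sum>d<n. ?P (\<sigma> a) (\<sigma> b) (\<sigma> c) (\<sigma> d))"
    unfolding constant_product_count_def
    by (intro sum.cong refl) (simp add: constant_product_signed_permutation[OF \<sigma> \<tau> r s K] del: sum_of_bool_eq)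
  also have "\<dots> = (\<Sum>a<n. \<Sum>b<n. \<Sum>c<n. \<Sum>d<n. ?P a b c d)"
    by (simp only: reindex[of "\<lambda>d. ?P _ _ _ d"] reindex[of "\<lambda>c. \<Sum>d<n. ?P _ _ c d"]
        reindex[of "\<lambda>b. \<Sum>c<n. \<Sum>d<n. ?P _ b c d"] reindex[of "\<lambda>a. \<Sum>b<n. \<Sum>c<n. \<Sum>d<n. ?P a b c d"])
  finally show ?thesis unfolding constant_product_count_def .
qed

lemma constant_product_unique:
  assumes H: "hadamard n H" and bounds: "a < n" "b < n" "c < n" "d < n" "d' < n"
    and "constant_product n H a b c d" and "constant_product n H a b c d'"
  shows "d = d'"
proof (rule ccontr)
  assume "d \<noteq> d'"
  let ?v = "\<lambda>j. H a j * H b j * H c j"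
  have signs: "\<forall>j<n. ?v j * H e j = 1 \<or> ?v j * H e j = -1" if "e < n" for e
    using bounds that by (intro allI impI hadamard_row_product_sign[OF H]) auto
  obtain e where e: "e = 1 \<or> e = -1" "\<forall>j<n. ?v j * H d j = e"
    using abs_sum_signs_eq_imp_constant[OF signs[OF \<open>d < n\<close>]] \<open>constant_product n H a b c d\<close>
    unfolding constant_product_def by blast
  obtain e' where e': "e' = 1 \<or> e' = -1" "\<forall>j<n. ?v j * H d' j = e'"
    using abs_sum_signs_eq_imp_constant[OF signs[OF \<open>d' < n\<close>]] \<open>constant_product n H a b c d'\<close>
    unfolding constant_product_def by blast
  have "H d j * H d' j = e * e'" if "j < n" for j
  proof -
    have "?v j = 1 \<or> ?v j = -1"
      using bounds that by (intro sign_mult hadamard_entry[OF H])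
    then have "?v j * ?v j = 1" by auto
    then have "H d j * H d' j = (?v j * H d j) * (?v j * H d' j)" by (simp add: algebra_simps)
    then show ?thesis using e e' that by simp
  qed
  then have "(\<Sum>j<n. H d j * H d' j) = int n * (e * e')" by simp
  moreover have "(\<Sum>j<n. H d j * H d' j) = 0"
    using hadamard_inner_product[OF H] bounds \<open>d \<noteq> d'\<close> by simp
  ultimately show False using e e' bounds by auto
qed

lemma constant_product_count_less_cube:
  assumes H: "hadamard n H" and bounds: "a0 < n" "b0 < n" "c0 < n"
    and missing: "\<forall>d<n. \<not> constant_product n H a0 b0 c0 d"
  shows "constant_product_count n H < n ^ 3"
proof -
  let ?S = "\<lambda>a b c. \<Sum>d<n. of_bool (constant_product n H a b c d) :: nat"
  have at_most_one: "?S a b c \<le> 1" if "a < n" "b < n" "c < n" for a b c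
    using constant_product_unique[OF H that] by (simp add: card_le_Suc0_iff_eq)
  have "constant_product_count n H = (\<Sum>(a, b, c) \<in> {..<n} \<times> {..<n} \<times> {..<n}. ?S a b c)"
    unfolding constant_product_count_def by (simp only: sum.cartesian_product[symmetric])
  also have "\<dots> < (\<Sum>(a, b, c) \<in> {..<n} \<times> {..<n} \<times> {..<n}. 1)"
  proof (rule sum_strict_mono_ex1)
    show "\<forall>x \<in> {..<n} \<times> {..<n} \<times> {..<n}. (case x of (a, b, c) \<Rightarrow> ?S a b c) \<le> (case x of (a, b, c) \<Rightarrow> 1)"
      using at_most_one by auto
    show "\<exists>x \<in> {..<n} \<times> {..<n} \<times> {..<n}. (case x of (a, b, c) \<Rightarrow> ?S a b c) < (case x of (a, b, c) \<Rightarrow> 1)"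
      using bounds missing by (intro bexI[of _ "(a0, b0, c0)"]) auto
  qed simp
  also have "\<dots> = n ^ 3"
    by (simp add: power3_eq_cube)
  finally show ?thesis .
qed

lemma constant_product_count_pos:
  assumes H: "hadamard n H" and "0 < n"
  shows "0 < constant_product_count n H"
proof -
  have "H 0 j * H 0 j * H 0 j * H 0 j = 1" if "j < n" for j
    using hadamard_entry[OF H \<open>0 < n\<close> that] by auto
  then have "(\<Sum>j<n. H 0 j * H 0 j * H 0 j * H 0 j) = (\<Sum>j<n. 1)"
    by (intro sum.cong) auto
  then have "constant_product n H 0 0 0 0"
    unfolding constant_product_def by simp
  then show ?thesis
    unfolding constant_product_count_def using \<open>0 < n\<close>
    by (intro sum_pos2[where i = 0]) (auto simp del: sum_of_bool_eq)
qed

definition matrix_of_rows :: "int list list \<Rightarrow> nat \<Rightarrow> nat \<Rightarrow> int" where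
  "matrix_of_rows L i j = L ! i ! j"

lemma sum_list_map2_times:
  "length xs = n \<Longrightarrow> length ys = n \<Longrightarrow> sum_list (map2 (*) xs ys) = (\<Sum>j<n. xs ! j * ys ! j :: int)"
  by (simp add: sum_list_sum_nth atLeast0LessThan)

lemma hadamard_matrix_of_rows:
  assumes len: "length L = n" and rows: "\<forall>r\<in>set L. length r = n"
    and signs: "\<forall>r\<in>set L. \<forall>x\<in>set r. x = 1 \<or> x = -1"
    and orth: "sorted_wrt (\<lambda>r s. sum_list (map2 (*) r s) = 0) L"
  shows "hadamard n (matrix_of_rows L)"
  unfolding hadamard_def
proof (intro conjI allI impI)
  have entry: "L ! i ! j = 1 \<or> L ! i ! j = -1" if "i < n" "j < n" for i j
    using signs rows len that by (metis nth_mem)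
  then show "matrix_of_rows L i j = 1 \<or> matrix_of_rows L i j = -1" if "i < n" "j < n" for i j
    using that unfolding matrix_of_rows_def by blast
  fix i k assume i: "i < n" and k: "k < n"
  have inner: "(\<Sum>j<n. L ! x ! j * L ! y ! j) = sum_list (map2 (*) (L ! x) (L ! y))"
    if "x < n" "y < n" for x y
    using that len rows by (simp add: sum_list_map2_times)
  consider "i = k" | "i < k" | "k < i" by linarith
  then show "(\<Sum>j<n. matrix_of_rows L i j * matrix_of_rows L k j) = (if i = k then int n else 0)"
  proof cases
    case 1
    have "(\<Sum>j<n. L ! i ! j * L ! i ! j) = (\<Sum>j<n. 1)"
      using entry[OF i] by (intro sum.cong) fastforce+
    then show ?thesis using 1 unfolding matrix_of_rows_def by simp
  next
    case 2
    then show ?thesis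
      using orth i k len inner unfolding matrix_of_rows_def sorted_wrt_iff_nth_less by simp
  next
    case 3
    have "(\<Sum>j<n. L ! i ! j * L ! k ! j) = (\<Sum>j<n. L ! k ! j * L ! i ! j)"
      by (simp add: mult.commute)
    then show ?thesis
      using 3 orth i k len inner unfolding matrix_of_rows_def sorted_wrt_iff_nth_less by simp
  qed
qed

lemma transpose_eq_imp_nth_sym:
  assumes len: "length L = n" and rows: "\<forall>r\<in>set L. length r = n" and sym: "transpose L = L"
    and "i < n" "j < n"
  shows "L ! i ! j = L ! j ! i"
proof -
  have rect: "transpose L = map (\<lambda>i. map (\<lambda>j. L ! j ! i) [0..<length L]) [0..<n]"
    using len rows by (intro transpose_rectangle) auto
  have "L ! i ! j = transpose L ! i ! j"
    using sym by simp
  also have "\<dots> = L ! j ! i"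
    unfolding rect using assms by simp
  finally show ?thesis .
qed

lemma graphical_matrix_of_rows:
  assumes "length L = n" and "\<forall>r\<in>set L. length r = n" and "transpose L = L"
    and diag: "list_all (\<lambda>i. L ! i ! i = 1) [0..<n]"
  shows "graphical n (matrix_of_rows L)"
  using transpose_eq_imp_nth_sym[OF assms(1-3)] diag
  unfolding graphical_def matrix_of_rows_def by (auto simp: list_all_iff)

lemma regular_matrix_of_rows:
  assumes len: "length L = n" and rows: "\<forall>r\<in>set L. length r = n" and sym: "transpose L = L"
    and row_sums: "\<forall>r\<in>set L. sum_list r = s"
  shows "regular n (matrix_of_rows L)"
  unfolding regular_def
proof (intro exI[of _ s] conjI allI impI)
  have row: "(\<Sum>j<n. matrix_of_rows L i j) = s" if "i < n" for i
    using that len rows row_sums unfolding matrix_of_rows_def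
    by (simp add: sum_list_sum_nth atLeast0LessThan[symmetric])
  then show "(\<Sum>j<n. matrix_of_rows L i j) = s" if "i < n" for i
    using that .
  fix j assume "j < n"
  then have "(\<Sum>i<n. matrix_of_rows L i j) = (\<Sum>i<n. matrix_of_rows L j i)"
    unfolding matrix_of_rows_def using transpose_eq_imp_nth_sym[OF len rows sym] by (intro sum.cong) auto
  then show "(\<Sum>i<n. matrix_of_rows L i j) = s"
    using row[OF \<open>j < n\<close>] by simp
qed

lemma no_constant_product_matrix_of_rows:
  assumes len: "length L = n" and rows: "\<forall>r\<in>set L. length r = n" and "a < n" "b < n" "c < n"
    and no_row: "\<forall>r\<in>set L. \<bar>sum_list (map2 (*) (map2 (*) (map2 (*) (L ! a) (L ! b)) (L ! c)) r)\<bar> \<noteq> int n"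
  shows "\<forall>d<n. \<not> constant_product n (matrix_of_rows L) a b c d"
proof (intro allI impI)
  fix d assume "d < n"
  have l: "length (L ! x) = n" if "x < n" for x
    using rows len that by simp
  have "sum_list (map2 (*) (map2 (*) (map2 (*) (L ! a) (L ! b)) (L ! c)) (L ! d))
      = (\<Sum>j<n. L ! a ! j * L ! b ! j * L ! c ! j * L ! d ! j)"
    using assms \<open>d < n\<close> l by (simp add: sum_list_map2_times)
  then show "\<not> constant_product n (matrix_of_rows L) a b c d"
    using no_row len \<open>d < n\<close> unfolding constant_product_def matrix_of_rows_def by (metis nth_mem)
qed

section \<open>The two building blocks\<close>

definition hadamard4_rows :: "int list list" where
  "hadamard4_rows = [[-1,1,1,1],[1,-1,1,1],[1,1,-1,1],[1,1,1,-1]]"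

lemma hadamard4: "hadamard 4 (matrix_of_rows hadamard4_rows)"
  unfolding hadamard_def by code_simp

lemma graphical4: "graphical 4 (matrix_of_rows hadamard4_rows)"
  unfolding graphical_def by code_simp

lemma regular4: "regular 4 (matrix_of_rows hadamard4_rows)"
  unfolding regular_def by (rule exI[of _ 2]) code_simp

lemma constant_product_count4: "constant_product_count 4 (matrix_of_rows hadamard4_rows) = 64"
  by code_simp

definition hadamard64_rows :: "int list list" where
  "hadamard64_rows = [[1,1,1,1,1,1,1,1,1,-1,-1,1,-1,1,-1,1,1,1,1,-1,-1,-1,-1,1,1,-1,-1,-1,1,-1,1,1,1,1,-1,-1,-1,1,1,-1,1,-1,1,-1,1,1,-1,-1,1,1,-1,1,1,-1,-1,-1,1,-1,1,1,-1,-1,1,-1],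
 [1,1,1,1,1,1,1,1,-1,1,1,-1,1,-1,1,-1,1,1,-1,1,-1,-1,1,-1,-1,1,-1,-1,-1,1,1,1,1,1,-1,-1,1,-1,-1,1,-1,1,-1,1,1,1,-1,-1,1,1,1,-1,-1,1,-1,-1,-1,1,1,1,-1,-1,-1,1],
 [1,1,1,1,1,1,1,1,-1,1,1,-1,-1,1,-1,1,1,-1,1,1,-1,1,-1,-1,-1,-1,1,-1,1,1,1,-1,-1,-1,1,1,1,-1,-1,1,1,-1,1,-1,-1,-1,1,1,-1,1,1,1,-1,-1,1,-1,1,1,1,-1,1,-1,-1,-1],
 [1,1,1,1,1,1,1,1,1,-1,-1,1,1,-1,1,-1,-1,1,1,1,1,-1,-1,-1,-1,-1,-1,1,1,1,-1,1,-1,-1,1,1,-1,1,1,-1,-1,1,-1,1,-1,-1,1,1,1,-1,1,1,-1,-1,-1,1,1,1,-1,1,-1,1,-1,-1],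
 [1,1,1,1,1,1,1,1,-1,1,-1,1,1,-1,-1,1,-1,-1,-1,1,1,1,1,-1,1,-1,1,1,1,-1,-1,-1,-1,1,1,-1,1,1,-1,-1,1,1,-1,-1,1,-1,1,-1,1,-1,-1,-1,1,1,-1,1,-1,-1,1,-1,1,-1,1,1],
 [1,1,1,1,1,1,1,1,1,-1,1,-1,-1,1,1,-1,-1,-1,1,-1,1,1,-1,1,-1,1,1,1,-1,1,-1,-1,1,-1,-1,1,1,1,-1,-1,1,1,-1,-1,-1,1,-1,1,-1,1,-1,-1,1,1,1,-1,-1,-1,-1,1,-1,1,1,1],
 [1,1,1,1,1,1,1,1,-1,1,-1,1,-1,1,1,-1,-1,1,-1,-1,1,-1,1,1,1,1,1,-1,-1,-1,1,-1,1,-1,-1,1,-1,-1,1,1,-1,-1,1,1,1,-1,1,-1,-1,-1,1,-1,-1,1,1,1,1,-1,-1,-1,1,1,1,-1],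
 [1,1,1,1,1,1,1,1,1,-1,1,-1,1,-1,-1,1,1,-1,-1,-1,-1,1,1,1,1,1,-1,1,-1,-1,-1,1,-1,1,1,-1,-1,-1,1,1,-1,-1,1,1,-1,1,-1,1,-1,-1,-1,1,1,-1,1,1,-1,1,-1,-1,1,1,-1,1],
 [1,-1,-1,1,-1,1,-1,1,1,1,1,1,1,1,1,1,1,-1,-1,-1,1,-1,1,1,1,1,1,-1,-1,-1,-1,1,1,-1,1,-1,1,1,-1,-1,1,1,-1,-1,-1,1,1,-1,1,-1,1,1,-1,-1,1,-1,1,1,-1,1,1,-1,-1,-1],
 [-1,1,1,-1,1,-1,1,-1,1,1,1,1,1,1,1,1,-1,1,-1,-1,-1,1,1,1,1,1,-1,1,-1,-1,1,-1,-1,1,-1,1,1,1,-1,-1,1,1,-1,-1,1,-1,-1,1,-1,1,1,1,-1,-1,-1,1,1,1,1,-1,-1,1,-1,-1],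
 [-1,1,1,-1,-1,1,-1,1,1,1,1,1,1,1,1,1,-1,-1,1,-1,1,1,1,-1,1,-1,1,1,-1,1,-1,-1,1,-1,1,-1,-1,-1,1,1,-1,-1,1,1,1,-1,-1,1,1,1,1,-1,1,-1,-1,-1,-1,1,1,1,-1,-1,1,-1],
 [1,-1,-1,1,1,-1,1,-1,1,1,1,1,1,1,1,1,-1,-1,-1,1,1,1,-1,1,-1,1,1,1,1,-1,-1,-1,-1,1,-1,1,-1,-1,1,1,-1,-1,1,1,-1,1,1,-1,1,1,-1,1,-1,1,-1,-1,1,-1,1,1,-1,-1,-1,1],
 [-1,1,-1,1,1,-1,-1,1,1,1,1,1,1,1,1,1,1,-1,1,1,1,-1,-1,-1,-1,-1,-1,1,1,1,1,-1,1,1,-1,-1,1,-1,1,-1,-1,1,1,-1,1,1,-1,-1,-1,-1,1,-1,1,-1,1,1,1,-1,-1,-1,1,1,-1,1],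
 [1,-1,1,-1,-1,1,1,-1,1,1,1,1,1,1,1,1,-1,1,1,1,-1,1,-1,-1,-1,-1,1,-1,1,1,-1,1,1,1,-1,-1,-1,1,-1,1,1,-1,-1,1,1,1,-1,-1,-1,-1,-1,1,-1,1,1,1,-1,1,-1,-1,1,1,1,-1],
 [-1,1,-1,1,-1,1,1,-1,1,1,1,1,1,1,1,1,1,1,1,-1,-1,-1,1,-1,-1,1,-1,-1,1,-1,1,1,-1,-1,1,1,1,-1,1,-1,1,-1,-1,1,-1,-1,1,1,1,-1,-1,-1,1,1,1,-1,-1,-1,1,-1,-1,1,1,1],
 [1,-1,1,-1,1,-1,-1,1,1,1,1,1,1,1,1,1,1,1,-1,1,-1,-1,-1,1,1,-1,-1,-1,-1,1,1,1,-1,-1,1,1,-1,1,-1,1,-1,1,1,-1,-1,-1,1,1,-1,1,-1,-1,1,1,-1,1,-1,-1,-1,1,1,-1,1,1],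
 [1,1,1,-1,-1,-1,-1,1,1,-1,-1,-1,1,-1,1,1,1,1,1,1,1,1,1,1,1,-1,-1,1,-1,1,-1,1,1,1,-1,1,1,-1,-1,-1,1,-1,1,1,-1,-1,1,-1,1,1,-1,-1,-1,1,1,-1,1,-1,1,-1,1,1,-1,-1],
 [1,1,-1,1,-1,-1,1,-1,-1,1,-1,-1,-1,1,1,1,1,1,1,1,1,1,1,1,-1,1,1,-1,1,-1,1,-1,1,1,1,-1,-1,1,-1,-1,-1,1,1,1,-1,-1,-1,1,1,1,-1,-1,1,-1,-1,1,-1,1,-1,1,1,1,-1,-1],
 [1,-1,1,1,-1,1,-1,-1,-1,-1,1,-1,1,1,1,-1,1,1,1,1,1,1,1,1,-1,1,1,-1,-1,1,-1,1,-1,1,1,1,-1,-1,1,-1,1,1,1,-1,1,-1,-1,-1,-1,-1,1,1,1,-1,-1,1,1,-1,1,-1,-1,-1,1,1],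
 [-1,1,1,1,1,-1,-1,-1,-1,-1,-1,1,1,1,-1,1,1,1,1,1,1,1,1,1,1,-1,-1,1,1,-1,1,-1,1,-1,1,1,-1,-1,-1,1,1,1,-1,1,-1,1,-1,-1,-1,-1,1,1,-1,1,1,-1,-1,1,-1,1,-1,-1,1,1],
 [-1,-1,-1,1,1,1,1,-1,1,-1,1,1,1,-1,-1,-1,1,1,1,1,1,1,1,1,-1,1,-1,1,1,-1,-1,1,1,-1,-1,-1,1,1,-1,1,-1,-1,1,-1,1,-1,1,1,-1,1,1,-1,1,1,-1,-1,1,1,-1,-1,1,-1,1,-1],
 [-1,-1,1,-1,1,1,-1,1,-1,1,1,1,-1,1,-1,-1,1,1,1,1,1,1,1,1,1,-1,1,-1,-1,1,1,-1,-1,1,-1,-1,1,1,1,-1,-1,-1,-1,1,-1,1,1,1,1,-1,-1,1,1,1,-1,-1,1,1,-1,-1,-1,1,-1,1],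
 [-1,1,-1,-1,1,-1,1,1,1,1,1,-1,-1,-1,1,-1,1,1,1,1,1,1,1,1,-1,1,-1,1,-1,1,1,-1,-1,-1,1,-1,-1,1,1,1,1,-1,-1,-1,1,1,1,-1,1,-1,-1,1,-1,-1,1,1,-1,-1,1,1,1,-1,1,-1],
 [1,-1,-1,-1,-1,1,1,1,1,1,-1,1,-1,-1,-1,1,1,1,1,1,1,1,1,1,1,-1,1,-1,1,-1,-1,1,-1,-1,-1,1,1,-1,1,1,-1,1,-1,-1,1,1,-1,1,-1,1,1,-1,-1,-1,1,1,-1,-1,1,1,-1,1,-1,1],
 [1,-1,-1,-1,1,-1,1,1,1,1,1,-1,-1,-1,-1,1,1,-1,-1,1,-1,1,-1,1,1,1,1,1,1,1,1,1,1,-1,1,1,-1,-1,1,-1,1,1,-1,1,1,-1,-1,-1,1,-1,1,-1,1,1,-1,-1,1,1,-1,-1,-1,1,1,-1],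
 [-1,1,-1,-1,-1,1,1,1,1,1,-1,1,-1,-1,1,-1,-1,1,1,-1,1,-1,1,-1,1,1,1,1,1,1,1,1,-1,1,1,1,-1,-1,-1,1,1,1,1,-1,-1,1,-1,-1,-1,1,-1,1,1,1,-1,-1,1,1,-1,-1,1,-1,-1,1],
 [-1,-1,1,-1,1,1,1,-1,1,-1,1,1,-1,1,-1,-1,-1,1,1,-1,-1,1,-1,1,1,1,1,1,1,1,1,1,1,1,1,-1,1,-1,-1,-1,-1,1,1,1,-1,-1,1,-1,1,-1,1,-1,-1,-1,1,1,-1,-1,1,1,1,-1,-1,1],
 [-1,-1,-1,1,1,1,-1,1,-1,1,1,1,1,-1,-1,-1,1,-1,-1,1,1,-1,1,-1,1,1,1,1,1,1,1,1,1,1,-1,1,-1,1,-1,-1,1,-1,1,1,-1,-1,-1,1,-1,1,-1,1,-1,-1,1,1,-1,-1,1,1,-1,1,1,-1],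
 [1,-1,1,1,1,-1,-1,-1,-1,-1,-1,1,1,1,1,-1,-1,1,-1,1,1,-1,-1,1,1,1,1,1,1,1,1,1,-1,-1,1,-1,1,-1,1,1,1,-1,-1,-1,1,1,-1,1,1,1,-1,-1,1,-1,1,-1,-1,1,1,-1,1,1,-1,-1],
 [-1,1,1,1,-1,1,-1,-1,-1,-1,1,-1,1,1,-1,1,1,-1,1,-1,-1,1,1,-1,1,1,1,1,1,1,1,1,-1,-1,-1,1,-1,1,1,1,-1,1,-1,-1,1,1,1,-1,1,1,-1,-1,-1,1,-1,1,1,-1,-1,1,1,1,-1,-1],
 [1,1,1,-1,-1,-1,1,-1,-1,1,-1,-1,1,-1,1,1,-1,1,-1,1,-1,1,1,-1,1,1,1,1,1,1,1,1,1,-1,-1,-1,1,1,1,-1,-1,-1,1,-1,-1,1,1,1,-1,-1,1,1,1,-1,1,-1,1,-1,-1,1,-1,-1,1,1],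
 [1,1,-1,1,-1,-1,-1,1,1,-1,-1,-1,-1,1,1,1,1,-1,1,-1,1,-1,-1,1,1,1,1,1,1,1,1,1,-1,1,-1,-1,1,1,-1,1,-1,-1,-1,1,1,-1,1,1,-1,-1,1,1,-1,1,-1,1,-1,1,1,-1,-1,-1,1,1],
 [1,1,-1,-1,-1,1,1,-1,1,-1,1,-1,1,1,-1,-1,1,1,-1,1,1,-1,-1,-1,1,-1,1,1,-1,-1,1,-1,1,1,1,1,1,1,1,1,1,-1,-1,1,-1,1,-1,1,1,1,1,-1,-1,-1,-1,1,1,-1,-1,-1,1,-1,1,1],
 [1,1,-1,-1,1,-1,-1,1,-1,1,-1,1,1,1,-1,-1,1,1,1,-1,-1,1,-1,-1,-1,1,1,1,-1,-1,-1,1,1,1,1,1,1,1,1,1,-1,1,1,-1,1,-1,1,-1,1,1,-1,1,-1,-1,1,-1,-1,1,-1,-1,-1,1,1,1],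
 [-1,-1,1,1,1,-1,-1,1,1,-1,1,-1,-1,-1,1,1,-1,1,1,1,-1,-1,1,-1,1,1,1,-1,1,-1,-1,-1,1,1,1,1,1,1,1,1,-1,1,1,-1,-1,1,-1,1,1,-1,1,1,-1,1,-1,-1,-1,-1,1,-1,1,1,1,-1],
 [-1,-1,1,1,-1,1,1,-1,-1,1,-1,1,-1,-1,1,1,1,-1,1,1,-1,-1,-1,1,1,1,-1,1,-1,1,-1,-1,1,1,1,1,1,1,1,1,1,-1,-1,1,1,-1,1,-1,-1,1,1,1,1,-1,-1,-1,-1,-1,-1,1,1,1,-1,1],
 [-1,1,1,-1,1,1,-1,-1,1,1,-1,-1,1,-1,1,-1,1,-1,-1,-1,1,1,-1,1,-1,-1,1,-1,1,-1,1,1,1,1,1,1,1,1,1,1,-1,1,-1,1,1,-1,-1,1,-1,-1,-1,1,1,1,1,-1,1,-1,1,1,1,-1,-1,-1],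
 [1,-1,-1,1,1,1,-1,-1,1,1,-1,-1,-1,1,-1,1,-1,1,-1,-1,1,1,1,-1,-1,-1,-1,1,-1,1,1,1,1,1,1,1,1,1,1,1,1,-1,1,-1,-1,1,1,-1,-1,-1,1,-1,1,1,-1,1,-1,1,1,1,-1,1,-1,-1],
 [1,-1,-1,1,-1,-1,1,1,-1,-1,1,1,1,-1,1,-1,-1,-1,1,-1,-1,1,1,1,1,-1,-1,-1,1,1,1,-1,1,1,1,1,1,1,1,1,-1,1,-1,1,-1,1,1,-1,-1,1,-1,-1,1,-1,1,1,1,1,1,-1,-1,-1,1,-1],
 [-1,1,1,-1,-1,-1,1,1,-1,-1,1,1,-1,1,-1,1,-1,-1,-1,1,1,-1,1,1,-1,1,-1,-1,1,1,-1,1,1,1,1,1,1,1,1,1,1,-1,1,-1,1,-1,-1,1,1,-1,-1,-1,-1,1,1,1,1,1,-1,1,-1,-1,-1,1],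
 [1,-1,1,-1,1,1,-1,-1,1,1,-1,-1,-1,1,1,-1,1,-1,1,1,-1,-1,1,-1,1,1,-1,1,1,-1,-1,-1,1,-1,-1,1,-1,1,-1,1,1,1,1,1,1,1,1,1,1,-1,-1,-1,1,-1,1,1,1,1,1,-1,-1,-1,-1,1],
 [-1,1,-1,1,1,1,-1,-1,1,1,-1,-1,1,-1,-1,1,-1,1,1,1,-1,-1,-1,1,1,1,1,-1,-1,1,-1,-1,-1,1,1,-1,1,-1,1,-1,1,1,1,1,1,1,1,1,-1,1,-1,-1,-1,1,1,1,1,1,-1,1,-1,-1,1,-1],
 [1,-1,1,-1,-1,-1,1,1,-1,-1,1,1,1,-1,-1,1,1,1,1,-1,1,-1,-1,-1,-1,1,1,1,-1,-1,1,-1,-1,1,1,-1,-1,1,-1,1,1,1,1,1,1,1,1,1,-1,-1,1,-1,1,1,1,-1,1,-1,1,1,-1,1,-1,-1],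
 [-1,1,-1,1,-1,-1,1,1,-1,-1,1,1,-1,1,1,-1,1,1,-1,1,-1,1,-1,-1,1,-1,1,1,-1,-1,-1,1,1,-1,-1,1,1,-1,1,-1,1,1,1,1,1,1,1,1,-1,-1,-1,1,1,1,-1,1,-1,1,1,1,1,-1,-1,-1],
 [1,1,-1,-1,1,-1,1,-1,-1,1,1,-1,1,1,-1,-1,-1,-1,1,-1,1,-1,1,1,1,-1,-1,-1,1,1,-1,1,-1,1,-1,1,1,-1,-1,1,1,1,1,1,1,1,1,1,1,-1,1,1,1,-1,-1,-1,-1,-1,-1,1,1,1,1,-1],
 [1,1,-1,-1,-1,1,-1,1,1,-1,-1,1,1,1,-1,-1,-1,-1,-1,1,-1,1,1,1,-1,1,-1,-1,1,1,1,-1,1,-1,1,-1,-1,1,1,-1,1,1,1,1,1,1,1,1,-1,1,1,1,-1,1,-1,-1,-1,-1,1,-1,1,1,-1,1],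
 [-1,-1,1,1,1,-1,1,-1,1,-1,-1,1,-1,-1,1,1,1,-1,-1,-1,1,1,1,-1,-1,-1,1,-1,-1,1,1,1,-1,1,-1,1,-1,1,1,-1,1,1,1,1,1,1,1,1,1,1,1,-1,-1,-1,1,-1,-1,1,-1,-1,1,-1,1,1],
 [-1,-1,1,1,-1,1,-1,1,-1,1,1,-1,-1,-1,1,1,-1,1,-1,-1,1,1,-1,1,-1,-1,-1,1,1,-1,1,1,1,-1,1,-1,1,-1,-1,1,1,1,1,1,1,1,1,1,1,1,-1,1,-1,-1,-1,1,1,-1,-1,-1,-1,1,1,1],
 [1,1,-1,1,1,-1,-1,-1,1,-1,1,1,-1,-1,1,-1,1,1,-1,-1,-1,1,1,-1,1,-1,1,-1,1,1,-1,-1,1,1,1,-1,-1,-1,-1,1,1,-1,-1,-1,1,-1,1,1,1,1,1,1,1,1,1,1,1,-1,-1,1,-1,1,-1,1],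
 [1,1,1,-1,-1,1,-1,-1,-1,1,1,1,-1,-1,-1,1,1,1,-1,-1,1,-1,-1,1,-1,1,-1,1,1,1,-1,-1,1,1,-1,1,-1,-1,1,-1,-1,1,-1,-1,-1,1,1,1,1,1,1,1,1,1,1,1,-1,1,1,-1,1,-1,1,-1],
 [-1,1,1,1,-1,-1,1,-1,1,1,1,-1,1,-1,-1,-1,-1,-1,1,1,1,-1,-1,1,1,-1,1,-1,-1,-1,1,1,1,-1,1,1,-1,1,-1,-1,-1,-1,1,-1,1,1,1,-1,1,1,1,1,1,1,1,1,-1,1,1,-1,-1,1,-1,1],
 [1,-1,1,1,-1,-1,-1,1,1,1,-1,1,-1,1,-1,-1,-1,-1,1,1,-1,1,1,-1,-1,1,-1,1,-1,-1,1,1,-1,1,1,1,1,-1,-1,-1,-1,-1,-1,1,1,1,-1,1,1,1,1,1,1,1,1,1,1,-1,-1,1,1,-1,1,-1],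
 [1,-1,-1,-1,1,1,-1,1,-1,-1,1,-1,1,-1,1,1,-1,1,1,-1,1,1,-1,-1,1,1,-1,-1,1,-1,1,-1,-1,-1,-1,1,1,1,1,-1,1,-1,1,1,1,-1,-1,-1,1,1,1,1,1,1,1,1,-1,1,-1,1,1,-1,-1,1],
 [-1,1,-1,-1,1,1,1,-1,-1,-1,-1,1,-1,1,1,1,1,-1,-1,1,1,1,-1,-1,1,1,-1,-1,-1,1,-1,1,-1,-1,1,-1,1,1,-1,1,-1,1,1,1,-1,1,-1,-1,1,1,1,1,1,1,1,1,1,-1,1,-1,-1,1,1,-1],
 [-1,-1,1,-1,-1,1,1,1,1,-1,-1,-1,1,1,1,-1,1,-1,-1,1,-1,-1,1,1,-1,-1,1,1,1,-1,1,-1,-1,1,-1,-1,1,-1,1,1,1,1,1,-1,-1,-1,1,-1,1,1,1,1,1,1,1,1,-1,1,-1,1,-1,1,1,-1],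
 [-1,-1,-1,1,1,-1,1,1,-1,1,-1,-1,1,1,-1,1,-1,1,1,-1,-1,-1,1,1,-1,-1,1,1,-1,1,-1,1,1,-1,-1,-1,-1,1,1,1,1,1,-1,1,-1,-1,-1,1,1,1,1,1,1,1,1,1,1,-1,1,-1,1,-1,-1,1],
 [1,-1,1,1,-1,-1,1,-1,1,1,-1,1,1,-1,-1,-1,1,-1,1,-1,1,1,-1,-1,1,1,-1,-1,-1,1,1,-1,1,-1,-1,-1,1,-1,1,1,1,1,1,-1,-1,-1,-1,1,1,-1,-1,1,-1,1,-1,1,1,1,1,1,1,1,1,1],
 [-1,1,1,1,-1,-1,-1,1,1,1,1,-1,-1,1,-1,-1,-1,1,-1,1,1,1,-1,-1,1,1,-1,-1,1,-1,-1,1,-1,1,-1,-1,-1,1,1,1,1,1,-1,1,-1,-1,1,-1,-1,1,1,-1,1,-1,1,-1,1,1,1,1,1,1,1,1],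
 [1,1,1,-1,1,-1,-1,-1,-1,1,1,1,-1,-1,1,-1,1,-1,1,-1,-1,-1,1,1,-1,-1,1,1,1,-1,-1,1,-1,-1,1,-1,1,1,1,-1,1,-1,1,1,-1,1,-1,-1,-1,1,1,-1,-1,1,-1,1,1,1,1,1,1,1,1,1],
 [1,1,-1,1,-1,1,-1,-1,1,-1,1,1,-1,-1,-1,1,-1,1,-1,1,-1,-1,1,1,-1,-1,1,1,-1,1,1,-1,-1,-1,-1,1,1,1,-1,1,-1,1,1,1,1,-1,-1,-1,1,-1,-1,1,1,-1,1,-1,1,1,1,1,1,1,1,1],
 [-1,-1,1,-1,1,-1,1,1,1,-1,-1,-1,1,1,-1,1,1,1,-1,-1,1,-1,1,-1,-1,1,1,-1,1,1,-1,-1,1,-1,1,1,1,-1,-1,-1,-1,-1,-1,1,1,1,1,-1,-1,1,-1,1,1,-1,-1,1,1,1,1,1,1,1,1,1],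
 [-1,-1,-1,1,-1,1,1,1,-1,1,-1,-1,1,1,1,-1,1,1,-1,-1,-1,1,-1,1,1,-1,-1,1,1,1,-1,-1,-1,1,1,1,-1,1,-1,-1,-1,-1,1,-1,1,1,-1,1,1,-1,1,-1,-1,1,1,-1,1,1,1,1,1,1,1,1],
 [1,-1,-1,-1,1,1,1,-1,-1,-1,1,-1,-1,1,1,1,-1,-1,1,1,1,-1,1,-1,1,-1,-1,1,-1,-1,1,1,1,1,1,-1,-1,-1,1,-1,-1,1,-1,-1,1,-1,1,1,-1,1,-1,1,-1,1,1,-1,1,1,1,1,1,1,1,1],
 [-1,1,-1,-1,1,1,-1,1,-1,-1,-1,1,1,-1,1,1,-1,-1,1,1,-1,1,-1,1,-1,1,1,-1,-1,-1,1,1,1,1,-1,1,-1,-1,-1,1,1,-1,-1,-1,-1,1,1,1,1,-1,1,-1,1,-1,-1,1,1,1,1,1,1,1,1,1]]"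



lemma hadamard64_rows_shape:
  "length hadamard64_rows = 64" "\<forall>r\<in>set hadamard64_rows. length r = 64"
  by code_simp+

lemma hadamard64_rows_symmetric: "transpose hadamard64_rows = hadamard64_rows"
  by code_simp

lemma hadamard64: "hadamard 64 (matrix_of_rows hadamard64_rows)"
  by (rule hadamard_matrix_of_rows[OF hadamard64_rows_shape]) code_simp+

lemma graphical64: "graphical 64 (matrix_of_rows hadamard64_rows)"
  by (rule graphical_matrix_of_rows[OF hadamard64_rows_shape hadamard64_rows_symmetric]) code_simp

lemma regular64: "regular 64 (matrix_of_rows hadamard64_rows)"
  by (rule regular_matrix_of_rows[OF hadamard64_rows_shape hadamard64_rows_symmetric, of 8]) code_simp

lemma constant_product_count64_less: "constant_product_count 64 (matrix_of_rows hadamard64_rows) < 64 ^ 3"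
proof (rule constant_product_count_less_cube[OF hadamard64])
  show "\<forall>d<64. \<not> constant_product 64 (matrix_of_rows hadamard64_rows) 0 1 2 d"
    by (rule no_constant_product_matrix_of_rows[OF hadamard64_rows_shape]) code_simp+
qed simp_all

section \<open>The construction\<close>

definition mixed_kron_power :: "nat \<Rightarrow> nat \<Rightarrow> nat \<Rightarrow> nat \<Rightarrow> int" where
  "mixed_kron_power N t =
     kron (4 ^ (3 * (N - t))) (kron_power 64 (matrix_of_rows hadamard64_rows) t)
       (kron_power 4 (matrix_of_rows hadamard4_rows) (3 * (N - t)))"

lemma mixed_kron_power_order:
  assumes "t \<le> N"
  shows "(4::nat) ^ (3 * N) = 64 ^ t * 4 ^ (3 * (N - t))"
proof -
  have "(64::nat) ^ t = 4 ^ (3 * t)"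
    by (simp add: power_mult)
  then show ?thesis
    using assms by (simp add: power_add[symmetric])
qed

lemma mixed_kron_power_regular_graphical_hadamard:
  assumes "t \<le> N"
  shows "hadamard (4 ^ (3 * N)) (mixed_kron_power N t) \<and> graphical (4 ^ (3 * N)) (mixed_kron_power N t)
    \<and> regular (4 ^ (3 * N)) (mixed_kron_power N t)"
  unfolding mixed_kron_power_order[OF assms] mixed_kron_power_def
  by (simp add: kron_hadamard kron_graphical kron_regular kron_power_hadamard kron_power_graphical
      kron_power_regular hadamard4 graphical4 regular4 hadamard64 graphical64 regular64)

lemma constant_product_count_mixed_kron_power:
  assumes "t \<le> N"
  shows "constant_product_count (4 ^ (3 * N)) (mixed_kron_power N t)
    = constant_product_count 64 (matrix_of_rows hadamard64_rows) ^ t * (64 ^ 3) ^ (N - t)"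
proof -
  have "constant_product_count (4 ^ (3 * N)) (mixed_kron_power N t)
      = constant_product_count (64 ^ t) (kron_power 64 (matrix_of_rows hadamard64_rows) t)
        * constant_product_count (4 ^ (3 * (N - t))) (kron_power 4 (matrix_of_rows hadamard4_rows) (3 * (N - t)))"
    unfolding mixed_kron_power_order[OF assms] mixed_kron_power_def
    by (rule constant_product_count_kron) (simp_all add: kron_power_hadamard hadamard4 hadamard64)
  also have "\<dots> = constant_product_count 64 (matrix_of_rows hadamard64_rows) ^ t * 64 ^ (3 * (N - t))"
    by (simp only: constant_product_count_kron_power hadamard4 hadamard64 constant_product_count4
        zero_less_numeral)
  finally show ?thesis
    by (simp only: power_mult)
qed

lemma inj_on_power_mult_power_diff:
  fixes c x :: nat
  assumes "0 < c" "c < x"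
  shows "inj_on (\<lambda>t. c ^ t * x ^ (N - t)) {..N}"
proof -
  have less: "c ^ t' * x ^ (N - t') < c ^ t * x ^ (N - t)" if "t < t'" "t' \<le> N" for t t'
  proof -
    have "c ^ t' * x ^ (N - t') = c ^ t * c ^ (t' - t) * x ^ (N - t')"
      using that by (simp add: power_add[symmetric])
    also have "\<dots> < c ^ t * x ^ (t' - t) * x ^ (N - t')"
      using assms that by (simp add: power_strict_mono)
    also have "\<dots> = c ^ t * x ^ (N - t)"
      using that by (simp add: mult.assoc power_add[symmetric])
    finally show ?thesis .
  qed
  show ?thesis
    by (rule inj_onI) (metis atMost_iff less less_irrefl linorder_neqE_nat)
qed

theorem mainTheorem7:
  shows "\<forall>N::nat. \<exists>m::nat. \<exists>S. finite S \<and> card S \<ge> N \<and>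
           (\<forall>H\<in>S. hadamard (4^m) H \<and> graphical (4^m) H \<and> regular (4^m) H) \<and>
           (\<forall>H\<in>S. \<forall>K\<in>S. H \<noteq> K \<longrightarrow> \<not> hadamard_equiv (4^m) H K)"
proof
  fix N :: nat
  let ?count = "constant_product_count (4 ^ (3 * N))"
  have "inj_on (\<lambda>t. constant_product_count 64 (matrix_of_rows hadamard64_rows) ^ t * (64 ^ 3) ^ (N - t)) {..N}"
    using constant_product_count_pos[OF hadamard64] constant_product_count64_less
    by (intro inj_on_power_mult_power_diff) auto
  then have inj: "inj_on (?count \<circ> mixed_kron_power N) {..N}"
    by (rule inj_on_cong[THEN iffD1, rotated]) (simp add: constant_product_count_mixed_kron_power)
  let ?S = "mixed_kron_power N ` {..N}"
  have "card ?S \<ge> N"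
    using card_image[OF inj_on_imageI2[OF inj]] by simp
  moreover have "\<not> hadamard_equiv (4 ^ (3 * N)) H K" if "H \<in> ?S" "K \<in> ?S" "H \<noteq> K" for H K
    using that inj constant_product_count_equiv unfolding inj_on_def by fastforce
  ultimately show "\<exists>m S. finite S \<and> card S \<ge> N \<and>
           (\<forall>H\<in>S. hadamard (4^m) H \<and> graphical (4^m) H \<and> regular (4^m) H) \<and>
           (\<forall>H\<in>S. \<forall>K\<in>S. H \<noteq> K \<longrightarrow> \<not> hadamard_equiv (4^m) H K)"
    using mixed_kron_power_regular_graphical_hadamard by (intro exI[of _ "3 * N"] exI[of _ ?S]) auto
qed

end
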